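(* Let $\tilde{\mathcal Z}\subseteq[0,1]^d$ and let $\mathcal Z_1,\dots,\mathcal Z_{3^d}$ be mutually disjoint subregions of $\tilde{\mathcal Z}$. Let $\Delta=\lfloor3^d/2\rfloor$. Apply an admissible algorithm with budget $n$ to any given CSO problem. If $\mathbb{P}(\tau(\tilde{\mathcal Z})\le n-\Delta)>0$, then there exists $\kappa_1$ such that $\mathbb{P}\bigl(\tau(\mathcal Z_{\kappa_1})\ge\tau(\tilde{\mathcal Z})+\Delta\bigm|\tau(\tilde{\mathcal Z})\le n-\Delta\bigr)\ge\frac12$. If $\mathbb{P}(\tau(\tilde{\mathcal Z})\le n-\Delta)<1$, then there exists $\kappa_2$ such that $\mathbb{P}\bigl(\tau(\mathcal Z_{\kappa_2})>n\bigm|\tau(\tilde{\mathcal Z})>n-\Delta\bigr)\ge\frac12$.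
   Context: A CSO problem: objective $y:[0,1]^d\to\mathbb{R}$; a query at $\mathbf{x}$ returns $Y(\mathbf{x})=y(\mathbf{x})+\varepsilon(\mathbf{x})$ with noise independent of everything else. Admissible algorithm with budget $n$: (i) $\mathbf{x}_1$ deterministic or a measurable function of a random vector $U_1$; (ii) for $t=1,\dots,n-1$, $\mathbf{x}_{t+1}$ a measurable function of $\mathbf{x}_1,Y(\mathbf{x}_1),\dots,\mathbf{x}_t,Y(\mathbf{x}_t)$ and a random vector $U_{t+1}$; (iii) output $\hat{\mathbf{x}}_n^*$ a measurable function of the full history and a random vector $U_n^*$; (iv) $\hat{\mathbf{x}}_n^*\in\{\mathbf{x}_1,\dots,\mathbf{x}_n\}$; the $U$'s are independent random vectors independent of the noise. First hitting time: $\tau(\mathcal Z)=\min\{t\in\{1,\dots,n\}:\mathbf{x}_t\in\mathcal Z\}$ if some $\mathbf{x}_t\in\mathcal Z$, and $\tau(\mathcal Z)=n+1$ otherwise. *)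

theory Defs
  imports "HOL-Probability.Probability"
begin

text \<open>The unit cube [0,1]^d, with d = CARD('d).\<close>
definition unit_cube :: "(real ^ 'd) set" where
  "unit_cube = {x. \<forall>i. 0 \<le> x $ i \<and> x $ i \<le> 1}"

definition hit_time :: "nat \<Rightarrow> (nat \<Rightarrow> 'w \<Rightarrow> 'p) \<Rightarrow> 'p set \<Rightarrow> 'w \<Rightarrow> nat" where
  "hit_time n x Z \<omega> =
     (if \<exists>t\<in>{1..n}. x t \<omega> \<in> Z then (LEAST t. t \<in> {1..n} \<and> x t \<omega> \<in> Z) else n + 1)"

definition history ::
  "(real ^ 'd \<Rightarrow> real) \<Rightarrow> (real ^ 'd \<Rightarrow> 'w \<Rightarrow> real) \<Rightarrow> (nat \<Rightarrow> 'w \<Rightarrow> real ^ 'd)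
    \<Rightarrow> nat \<Rightarrow> 'w \<Rightarrow> nat \<Rightarrow> (real ^ 'd) \<times> real" where
  "history y eps x t \<omega> = (\<lambda>s\<in>{1..t}. (x s \<omega>, y (x s \<omega>) + eps (x s \<omega>) \<omega>))"

text \<open>Admissible algorithm with budget n run on the CSO problem with objective y and noise eps,
  on the probability space M.\<close>
definition admissible_run ::
  "'w measure \<Rightarrow> (real ^ 'd \<Rightarrow> real) \<Rightarrow> (real ^ 'd \<Rightarrow> 'w \<Rightarrow> real) \<Rightarrow> nat
    \<Rightarrow> (nat \<Rightarrow> 'w \<Rightarrow> 'u::euclidean_space) \<Rightarrow> ('w \<Rightarrow> 'u)
    \<Rightarrow> (nat \<Rightarrow> 'w \<Rightarrow> real ^ 'd) \<Rightarrow> ('w \<Rightarrow> real ^ 'd) \<Rightarrow> bool" where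
  "admissible_run M y eps n U Ustar x xhat \<longleftrightarrow>
     (\<comment> \<open>U's: independent random vectors, jointly independent of the noise\<close>
      (\<forall>t\<in>{1..n}. U t \<in> borel_measurable M) \<and> Ustar \<in> borel_measurable M \<and>
      prob_space.indep_vars M (\<lambda>_. borel)
        (\<lambda>i. case i of Some t \<Rightarrow> U t | None \<Rightarrow> Ustar) (insert None (Some ` {1..n})) \<and>
      prob_space.indep_set M
        (sets (vimage_algebra (space M) (\<lambda>\<omega>. \<lambda>z. eps z \<omega>) (Pi\<^sub>M UNIV (\<lambda>_. borel))))
        (sets (vimage_algebra (space M)
           (\<lambda>\<omega>. \<lambda>i\<in>insert None (Some ` {1..n}). (case i of Some t \<Rightarrow> U t \<omega> | None \<Rightarrow> Ustar \<omega>))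
           (Pi\<^sub>M (insert None (Some ` {1..n})) (\<lambda>_. borel)))) \<and>
      \<comment> \<open>(i) first query: measurable function of U_1 (constant = deterministic)\<close>
      (\<exists>f1 \<in> borel_measurable borel. \<forall>\<omega>\<in>space M. x 1 \<omega> = f1 (U 1 \<omega>)) \<and>
      \<comment> \<open>(ii) subsequent queries: measurable in the history and U_{t+1}\<close>
      (\<forall>t\<in>{1..n-1}. \<exists>f \<in> (Pi\<^sub>M {1..t} (\<lambda>_. borel) \<Otimes>\<^sub>M borel) \<rightarrow>\<^sub>M borel.
         \<forall>\<omega>\<in>space M. x (Suc t) \<omega> = f (history y eps x t \<omega>, U (Suc t) \<omega>)) \<and>
      \<comment> \<open>(iii) output: measurable in the full history and Ustar\<close>
      (\<exists>g \<in> (Pi\<^sub>M {1..n} (\<lambda>_. borel) \<Otimes>\<^sub>M borel) \<rightarrow>\<^sub>M borel.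
         \<forall>\<omega>\<in>space M. xhat \<omega> = g (history y eps x n \<omega>, Ustar \<omega>)) \<and>
      \<comment> \<open>(iv) output is one of the queried points\<close>
      (\<forall>\<omega>\<in>space M. xhat \<omega> \<in> (\<lambda>t. x t \<omega>) ` {1..n}) \<and>
      \<comment> \<open>queries lie in the domain [0,1]^d\<close>
      (\<forall>t\<in>{1..n}. \<forall>\<omega>\<in>space M. x t \<omega> \<in> unit_cube))"

end

theory Submission
  imports Defs
begin

(*
  The pairwise disjoint regions Z_k are first hit at pairwise
  distinct query times, and none of them is hit before the region Zt containing
  them. Hence at most \<Delta> of the regions are first hit inside any window of \<Delta>
  consecutive query times: inside [\<tau>(Zt), \<tau>(Zt) + \<Delta>) when \<tau>(Zt) \<le> n - \<Delta>, and
  inside (n - \<Delta>, n] when \<tau>(Zt) > n - \<Delta>. So on either conditioning event at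
  least 3^d - \<Delta> \<ge> 3^d / 2 of the regions have the required property at every
  outcome. Summing the conditional probabilities over all regions therefore
  gives at least 3^d / 2, so one of the regions attains conditional probability
  at least 1/2.
*)

lemma hit_time_hit:
  fixes x :: "nat \<Rightarrow> 'w \<Rightarrow> 'p"
  assumes "t \<in> {1..n}" and "x t \<omega> \<in> Z"
  shows "hit_time n x Z \<omega> \<in> {1..t}" and "x (hit_time n x Z \<omega>) \<omega> \<in> Z"
proof -
  let ?P = "\<lambda>t. t \<in> {1..n} \<and> x t \<omega> \<in> Z"
  have eq: "hit_time n x Z \<omega> = (LEAST t. ?P t)"
    unfolding hit_time_def by (rule if_P) (use assms in blast)
  have "?P t"
    using assms by blast
  from LeastI[of ?P, OF this] Least_le[of ?P, OF this]
  show "hit_time n x Z \<omega> \<in> {1..t}" and "x (hit_time n x Z \<omega>) \<omega> \<in> Z"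
    unfolding eq by auto
qed

lemma hit_time_cases:
  fixes n :: nat and x :: "nat \<Rightarrow> 'w \<Rightarrow> 'p" and Z :: "'p set" and \<omega> :: 'w
  obtains (hit) "hit_time n x Z \<omega> \<in> {1..n}" "x (hit_time n x Z \<omega>) \<omega> \<in> Z"
    | (miss) "hit_time n x Z \<omega> = Suc n"
proof (cases "\<exists>t\<in>{1..n}. x t \<omega> \<in> Z")
  case True
  then obtain t where t: "t \<in> {1..n}" "x t \<omega> \<in> Z"
    by blast
  show ?thesis
    using hit_time_hit[of t n x \<omega> Z] t by (intro hit) auto
next
  case False
  then have "hit_time n x Z \<omega> = Suc n"
    unfolding hit_time_def by simp
  then show ?thesis
    by (rule miss)
qed

lemma hit_time_le_imp_mem: "hit_time n x Z \<omega> \<le> n \<Longrightarrow> x (hit_time n x Z \<omega>) \<omega> \<in> Z"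
  by (cases rule: hit_time_cases[of n x Z \<omega>]) auto

lemma hit_time_ge_1: "1 \<le> hit_time n x Z \<omega>"
  by (cases rule: hit_time_cases[of n x Z \<omega>]) auto

lemma hit_time_le_Suc: "hit_time n x Z \<omega> \<le> Suc n"
  by (cases rule: hit_time_cases[of n x Z \<omega>]) auto

lemma hit_time_antimono:
  assumes "Z \<subseteq> Z'"
  shows "hit_time n x Z' \<omega> \<le> hit_time n x Z \<omega>"
proof (cases rule: hit_time_cases[of n x Z \<omega>])
  case hit
  with assms show ?thesis
    using hit_time_hit(1)[of "hit_time n x Z \<omega>" n x \<omega> Z'] by auto
next
  case miss
  then show ?thesis
    using hit_time_le_Suc by simp
qed

lemma card_hit_time_in_le:
  assumes disj: "disjoint_family_on Z I" and W: "W \<subseteq> {..n}"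
  shows "card {k\<in>I. hit_time n x (Z k) \<omega> \<in> W} \<le> card W"
proof (rule card_inj_on_le)
  show "inj_on (\<lambda>k. hit_time n x (Z k) \<omega>) {k\<in>I. hit_time n x (Z k) \<omega> \<in> W}"
  proof (rule inj_onI)
    fix k l
    assume k: "k \<in> {k\<in>I. hit_time n x (Z k) \<omega> \<in> W}" and l: "l \<in> {k\<in>I. hit_time n x (Z k) \<omega> \<in> W}"
      and same: "hit_time n x (Z k) \<omega> = hit_time n x (Z l) \<omega>"
    have "x (hit_time n x (Z k) \<omega>) \<omega> \<in> Z k \<inter> Z l"
      using hit_time_le_imp_mem[of n x "Z k" \<omega>] hit_time_le_imp_mem[of n x "Z l" \<omega>] k l W same
      by auto
    with disj k l show "k = l"
      unfolding disjoint_family_on_def by blast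
  qed
qed (use W finite_subset in auto)

lemma card_hit_before_delay_le:
  assumes disj: "disjoint_family_on Z I" and sub: "\<And>k. k \<in> I \<Longrightarrow> Z k \<subseteq> Zt"
    and early: "hit_time n x Zt \<omega> \<le> n - D"
  shows "card {k\<in>I. \<not> hit_time n x Zt \<omega> + D \<le> hit_time n x (Z k) \<omega>} \<le> D"
proof -
  let ?\<tau> = "hit_time n x Zt \<omega>"
  have "{k\<in>I. \<not> ?\<tau> + D \<le> hit_time n x (Z k) \<omega>} = {k\<in>I. hit_time n x (Z k) \<omega> \<in> {?\<tau>..<?\<tau> + D}}"
    using hit_time_antimono[OF sub] by fastforce
  also have "card \<dots> \<le> card {?\<tau>..<?\<tau> + D}"
    using hit_time_ge_1[of n x Zt \<omega>] early by (intro card_hit_time_in_le disj) auto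
  finally show ?thesis
    by simp
qed

lemma card_hit_within_budget_le:
  assumes disj: "disjoint_family_on Z I" and sub: "\<And>k. k \<in> I \<Longrightarrow> Z k \<subseteq> Zt"
    and late: "n - D < hit_time n x Zt \<omega>"
  shows "card {k\<in>I. \<not> n < hit_time n x (Z k) \<omega>} \<le> D"
proof -
  have "n - D < hit_time n x (Z k) \<omega>" if "k \<in> I" for k
    using less_le_trans[OF late hit_time_antimono[OF sub[OF that]]] .
  then have "{k\<in>I. \<not> n < hit_time n x (Z k) \<omega>} = {k\<in>I. hit_time n x (Z k) \<omega> \<in> {n - D<..n}}"
    by auto
  also have "card \<dots> \<le> card {n - D<..n}"
    by (intro card_hit_time_in_le disj) auto
  finally show ?thesis
    by simp
qed

lemma half_card_le_card_filter:
  assumes "finite I" and "2 * card {k\<in>I. \<not> P k} \<le> card I"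
  shows "1 / 2 * real (card I) \<le> real (card {k\<in>I. P k})"
proof -
  have "card I = card ({k\<in>I. P k} \<union> {k\<in>I. \<not> P k})"
    by (rule arg_cong[where f = card]) blast
  also have "\<dots> = card {k\<in>I. P k} + card {k\<in>I. \<not> P k}"
    using assms(1) by (intro card_Un_disjoint) auto
  finally have "card I \<le> 2 * card {k\<in>I. P k}"
    using assms(2) by linarith
  then show ?thesis
    by (simp add: field_simps)
qed

lemma (in prob_space) exists_cond_prob_ge:
  assumes I: "finite I" "I \<noteq> {}"
    and Q[measurable]: "Measurable.pred M Q"
    and P[measurable]: "\<And>k. k \<in> I \<Longrightarrow> Measurable.pred M (P k)"
    and pos: "\<P>(\<omega> in M. Q \<omega>) > 0"
    and many: "\<And>\<omega>. \<omega> \<in> space M \<Longrightarrow> Q \<omega> \<Longrightarrow> c * real (card I) \<le> real (card {k\<in>I. P k \<omega>})"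
  shows "\<exists>k\<in>I. \<P>(\<omega> in M. P k \<omega> \<bar> Q \<omega>) \<ge> c"
proof (rule ccontr)
  assume "\<not> ?thesis"
  then have less: "\<P>(\<omega> in M. P k \<omega> \<and> Q \<omega>) < c * \<P>(\<omega> in M. Q \<omega>)" if "k \<in> I" for k
    using that pos by (auto simp: cond_prob_def not_le pos_divide_less_eq mult.commute)
  let ?A = "\<lambda>k. {\<omega> \<in> space M. P k \<omega> \<and> Q \<omega>}"
  have A: "?A k \<in> events" if "k \<in> I" for k
    using that by measurable
  have B: "{\<omega> \<in> space M. Q \<omega>} \<in> events"
    by measurable
  have "c * real (card I) * \<P>(\<omega> in M. Q \<omega>)
      = (\<integral>\<omega>. c * real (card I) * indicator {\<omega> \<in> space M. Q \<omega>} \<omega> \<partial>M)"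
    by simp
  also have "\<dots> \<le> (\<integral>\<omega>. (\<Sum>k\<in>I. indicator (?A k) \<omega>) \<partial>M)"
  proof (rule integral_mono)
    fix \<omega> assume \<omega>: "\<omega> \<in> space M"
    show "c * real (card I) * indicator {\<omega> \<in> space M. Q \<omega>} \<omega> \<le> (\<Sum>k\<in>I. indicator (?A k) \<omega>)"
    proof (cases "Q \<omega>")
      case True
      then have "(\<Sum>k\<in>I. indicator (?A k) \<omega>) = (\<Sum>k\<in>I. of_bool (P k \<omega>) :: real)"
        using \<omega> by (intro sum.cong) (auto simp: indicator_def)
      also have "\<dots> = real (card {k\<in>I. P k \<omega>})"
        using I(1) by (simp add: Collect_conj_eq Int_commute)
      finally show ?thesis
        using many[OF \<omega> True] \<omega> True by simp
    qed (simp add: sum_nonneg)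
  qed (use A B in \<open>auto simp: integrable_indicator_iff emeasure_finite less_top[symmetric]\<close>)
  also have "\<dots> = (\<Sum>k\<in>I. \<P>(\<omega> in M. P k \<omega> \<and> Q \<omega>))"
    using A by (subst Bochner_Integration.integral_sum) (auto simp: emeasure_finite less_top[symmetric])
  also have "\<dots> < (\<Sum>k\<in>I. c * \<P>(\<omega> in M. Q \<omega>))"
    using I less by (intro sum_strict_mono) auto
  finally show False
    by simp
qed

lemma (in prob_space) exists_region_hit_late:
  assumes I: "finite I" "I \<noteq> {}" and D: "2 * D \<le> card I"
    and disj: "disjoint_family_on Z I" and sub: "\<And>k. k \<in> I \<Longrightarrow> Z k \<subseteq> Zt"
    and [measurable]: "hit_time n x Zt \<in> borel_measurable M"
    and meas_Z: "\<And>k. k \<in> I \<Longrightarrow> hit_time n x (Z k) \<in> borel_measurable M"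
    and pos: "\<P>(\<omega> in M. hit_time n x Zt \<omega> \<le> n - D) > 0"
  shows "\<exists>k\<in>I. \<P>(\<omega> in M. hit_time n x (Z k) \<omega> \<ge> hit_time n x Zt \<omega> + D
                     \<bar> hit_time n x Zt \<omega> \<le> n - D) \<ge> 1 / 2"
proof (rule exists_cond_prob_ge[OF I _ _ pos])
  show "Measurable.pred M (\<lambda>\<omega>. hit_time n x Zt \<omega> \<le> n - D)"
    by measurable
  show "Measurable.pred M (\<lambda>\<omega>. hit_time n x (Z k) \<omega> \<ge> hit_time n x Zt \<omega> + D)" if "k \<in> I" for k
    using meas_Z[OF that] by measurable
  show "1 / 2 * real (card I) \<le> real (card {k\<in>I. hit_time n x (Z k) \<omega> \<ge> hit_time n x Zt \<omega> + D})"
    if "\<omega> \<in> space M" "hit_time n x Zt \<omega> \<le> n - D" for \<omega>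
    using card_hit_before_delay_le[OF disj sub that(2)] D by (intro half_card_le_card_filter I(1)) simp
qed

lemma (in prob_space) exists_region_missed:
  assumes I: "finite I" "I \<noteq> {}" and D: "2 * D \<le> card I"
    and disj: "disjoint_family_on Z I" and sub: "\<And>k. k \<in> I \<Longrightarrow> Z k \<subseteq> Zt"
    and [measurable]: "hit_time n x Zt \<in> borel_measurable M"
    and meas_Z: "\<And>k. k \<in> I \<Longrightarrow> hit_time n x (Z k) \<in> borel_measurable M"
    and pos: "\<P>(\<omega> in M. hit_time n x Zt \<omega> > n - D) > 0"
  shows "\<exists>k\<in>I. \<P>(\<omega> in M. hit_time n x (Z k) \<omega> > n \<bar> hit_time n x Zt \<omega> > n - D) \<ge> 1 / 2"
proof (rule exists_cond_prob_ge[OF I _ _ pos])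
  show "Measurable.pred M (\<lambda>\<omega>. hit_time n x Zt \<omega> > n - D)"
    by measurable
  show "Measurable.pred M (\<lambda>\<omega>. hit_time n x (Z k) \<omega> > n)" if "k \<in> I" for k
    using meas_Z[OF that] by measurable
  show "1 / 2 * real (card I) \<le> real (card {k\<in>I. hit_time n x (Z k) \<omega> > n})"
    if "\<omega> \<in> space M" "hit_time n x Zt \<omega> > n - D" for \<omega>
    using card_hit_within_budget_le[OF disj sub that(2)] D by (intro half_card_le_card_filter I(1)) simp
qed

lemma measurable_history:
  assumes y: "y \<in> borel_measurable borel"
    and eps: "(\<lambda>(z, \<omega>). eps z \<omega>) \<in> borel_measurable (borel \<Otimes>\<^sub>M M)"
    and x: "\<And>s. s \<in> {1..t} \<Longrightarrow> x s \<in> borel_measurable M"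
  shows "history y eps x t \<in> M \<rightarrow>\<^sub>M Pi\<^sub>M {1..t} (\<lambda>_. borel)"
  unfolding history_def[abs_def]
proof (rule measurable_restrict)
  fix s assume s: "s \<in> {1..t}"
  have [measurable]: "(\<lambda>\<omega>. eps (x s \<omega>) \<omega>) \<in> borel_measurable M"
    using measurable_compose[OF measurable_Pair[OF x[OF s] measurable_ident_sets[OF refl]] eps]
    by simp
  note [measurable] = x[OF s] y
  have "(\<lambda>\<omega>. (x s \<omega>, y (x s \<omega>) + eps (x s \<omega>) \<omega>)) \<in> M \<rightarrow>\<^sub>M borel \<Otimes>\<^sub>M borel"
    by measurable
  then show "(\<lambda>\<omega>. (x s \<omega>, y (x s \<omega>) + eps (x s \<omega>) \<omega>)) \<in> borel_measurable M"
    by (simp add: borel_prod)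
qed

lemma admissible_run_query_measurable:
  assumes y: "y \<in> borel_measurable borel"
    and eps: "(\<lambda>(z, \<omega>). eps z \<omega>) \<in> borel_measurable (borel \<Otimes>\<^sub>M M)"
    and alg: "admissible_run M y eps n U Ustar x xhat"
    and t: "t \<in> {1..n}"
  shows "x t \<in> borel_measurable M"
proof -
  from alg have U: "\<And>t. t \<in> {1..n} \<Longrightarrow> U t \<in> borel_measurable M"
    and query_1: "\<exists>f \<in> borel_measurable borel. \<forall>\<omega>\<in>space M. x 1 \<omega> = f (U 1 \<omega>)"
    and query_Suc: "\<And>s. s \<in> {1..n - 1} \<Longrightarrow> \<exists>f \<in> (Pi\<^sub>M {1..s} (\<lambda>_. borel) \<Otimes>\<^sub>M borel) \<rightarrow>\<^sub>M borel.
         \<forall>\<omega>\<in>space M. x (Suc s) \<omega> = f (history y eps x s \<omega>, U (Suc s) \<omega>)"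
    unfolding admissible_run_def by blast+
  show ?thesis
    using t
  proof (induction t rule: less_induct)
    case (less t)
    consider "t = 1" | s where "t = Suc s" "s \<in> {1..n - 1}"
    proof (cases "t = 1")
      case False
      then have "t = Suc (t - 1)" "t - 1 \<in> {1..n - 1}"
        using less.prems by auto
      with that(2) show ?thesis .
    qed (rule that(1))
    then show ?case
    proof cases
      case 1
      with query_1 obtain f where f: "f \<in> borel_measurable borel"
          and x_eq: "\<And>\<omega>. \<omega> \<in> space M \<Longrightarrow> x t \<omega> = f (U t \<omega>)"
        by blast
      show ?thesis
        using measurable_compose[OF U[OF less.prems] f]
        by (rule measurable_cong[THEN iffD2, rotated]) (rule x_eq)
    next
      case (2 s)
      with query_Suc obtain f where f: "f \<in> (Pi\<^sub>M {1..s} (\<lambda>_. borel) \<Otimes>\<^sub>M borel) \<rightarrow>\<^sub>M borel"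
          and x_eq: "\<And>\<omega>. \<omega> \<in> space M \<Longrightarrow> x t \<omega> = f (history y eps x s \<omega>, U t \<omega>)"
        by blast
      have "history y eps x s \<in> M \<rightarrow>\<^sub>M Pi\<^sub>M {1..s} (\<lambda>_. borel)"
        using 2 by (intro measurable_history[OF y eps] less.IH) auto
      then have "(\<lambda>\<omega>. f (history y eps x s \<omega>, U t \<omega>)) \<in> borel_measurable M"
        by (intro measurable_compose[OF _ f] measurable_Pair U less.prems)
      then show ?thesis
        by (rule measurable_cong[THEN iffD2, rotated]) (rule x_eq)
    qed
  qed
qed

lemma measurable_hit_time:
  assumes x: "\<And>t. t \<in> {1..n} \<Longrightarrow> x t \<in> borel_measurable M" and Z: "Z \<in> sets borel"
  shows "hit_time n x Z \<in> borel_measurable M"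
proof -
  have hit_at: "Measurable.pred M (\<lambda>\<omega>. x t \<omega> \<in> Z)" if "t \<in> {1..n}" for t
    using pred_sets2[OF Z x[OF that]] .
  then have first_hit: "Measurable.pred M (\<lambda>\<omega>. t \<in> {1..n} \<and> x t \<omega> \<in> Z)" for t
    by (intro pred_intros_conj1')
  have "Measurable.pred M (\<lambda>\<omega>. \<exists>t\<in>{1..n}. x t \<omega> \<in> Z)"
    by (intro pred_intros_finite(4) hit_at) simp_all
  then have "hit_time n x Z \<in> M \<rightarrow>\<^sub>M count_space UNIV"
    unfolding hit_time_def[abs_def] by (intro measurable_If measurable_Least first_hit) (simp_all add: pred_def)
  then show ?thesis
    by (simp add: measurable_cong_sets[OF refl sets_borel_eq_count_space])
qed

theorem corollary1:
  fixes M :: "'w measure"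
    and y :: "real ^ 'd \<Rightarrow> real"
    and eps :: "real ^ 'd \<Rightarrow> 'w \<Rightarrow> real"
    and n :: nat
    and U :: "nat \<Rightarrow> 'w \<Rightarrow> 'u::euclidean_space"
    and Ustar :: "'w \<Rightarrow> 'u"
    and x :: "nat \<Rightarrow> 'w \<Rightarrow> real ^ 'd"
    and xhat :: "'w \<Rightarrow> real ^ 'd"
    and Zt :: "(real ^ 'd) set"
    and Z :: "nat \<Rightarrow> (real ^ 'd) set"
  assumes M: "prob_space M"
    and y_meas: "y \<in> borel_measurable borel"
    and eps_meas: "(\<lambda>(z, \<omega>). eps z \<omega>) \<in> borel_measurable (borel \<Otimes>\<^sub>M M)"
    and alg: "admissible_run M y eps n U Ustar x xhat"
    and Zt_sub: "Zt \<subseteq> unit_cube"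
    and Zt_borel: "Zt \<in> sets borel"
    and Z_borel: "\<And>k. k \<in> {1..3 ^ CARD('d)} \<Longrightarrow> Z k \<in> sets borel"
    and Z_sub: "\<And>k. k \<in> {1..3 ^ CARD('d)} \<Longrightarrow> Z k \<subseteq> Zt"
    and Z_disj: "disjoint_family_on Z {1..3 ^ CARD('d)}"
  shows
    "(let \<Delta> = (3 ^ CARD('d)) div 2 in
      (\<P>(\<omega> in M. hit_time n x Zt \<omega> \<le> n - \<Delta>) > 0 \<longrightarrow>
        (\<exists>\<kappa>1\<in>{1..3 ^ CARD('d)}.
          \<P>(\<omega> in M. hit_time n x (Z \<kappa>1) \<omega> \<ge> hit_time n x Zt \<omega> + \<Delta>
                   \<bar> hit_time n x Zt \<omega> \<le> n - \<Delta>) \<ge> 1 / 2)) \<and>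
      (\<P>(\<omega> in M. hit_time n x Zt \<omega> \<le> n - \<Delta>) < 1 \<longrightarrow>
        (\<exists>\<kappa>2\<in>{1..3 ^ CARD('d)}.
          \<P>(\<omega> in M. hit_time n x (Z \<kappa>2) \<omega> > n
                   \<bar> hit_time n x Zt \<omega> > n - \<Delta>) \<ge> 1 / 2)))"
proof -
  interpret prob_space M by (rule M)
  let ?I = "{1..3 ^ CARD('d)} :: nat set" and ?\<Delta> = "3 ^ CARD('d) div 2 :: nat"
  have hit_meas: "hit_time n x Z' \<in> borel_measurable M" if "Z' \<in> sets borel" for Z'
    using measurable_hit_time[OF admissible_run_query_measurable[OF y_meas eps_meas alg] that] .
  have I: "finite ?I" "?I \<noteq> {}" "2 * ?\<Delta> \<le> card ?I"
    by simp_all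
  note regions = I Z_disj Z_sub hit_meas[OF Zt_borel] hit_meas[OF Z_borel]
  have "\<P>(\<omega> in M. hit_time n x Zt \<omega> > n - ?\<Delta>) = 1 - \<P>(\<omega> in M. hit_time n x Zt \<omega> \<le> n - ?\<Delta>)"
    using prob_neg[of "\<lambda>\<omega>. hit_time n x Zt \<omega> \<le> n - ?\<Delta>"] hit_meas[OF Zt_borel]
    by (simp add: not_le)
  then show ?thesis
    unfolding Let_def using exists_region_hit_late[OF regions] exists_region_missed[OF regions] by simp
qed

end
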